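(* Let $\mathsf k$ be an algebraically closed field of characteristic $p>0$, and let $m<n$, $l_2$, $l_3$ be nonnegative integers. If there exists $\beta\in\mathsf k[x,y]$ with $\beta(0,y)=\beta(x,0)=0$ and $\delta^2(\beta)(z_1,z_2,z_3)=z_1^{p^{l_3}}z_2^{p^{l_2+m}}z_3^{p^{l_2+n}}$, then $p\neq2$ and $l_3-l_2\in\{m,n\}$. Conversely, if $p\ne2$, then such a $\beta$ exists, namely $\beta(x,y)=\frac12x^{2p^{l_3}}y^{p^{l_2+n}}$ if $l_3-l_2=m$, and $\beta(x,y)=x^{p^{l_3}+p^{l_2+m}}y^{p^{l_3}}+\frac12x^{p^{l_2+m}}y^{2p^{l_3}}$ if $l_3-l_2=n$.
   Context: For $\beta\in\mathsf k[x,y]$, $\delta^2(\beta)(z_1,z_2,z_3)=\beta(z_1,z_2)+\beta(z_1+z_2,z_3)-\beta(z_2,z_3)-\beta(z_1,z_2+z_3)$. *)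

theory Defs
  imports "HOL-Computational_Algebra.Polynomial"
begin

text \<open>Bivariate polynomials k[x,y] are represented as 'a poly poly: the outer
variable is y, the coefficients are polynomials in x.
bieval h beta a b substitutes x := a, y := b (coefficients mapped via h).\<close>

definition bieval :: "('a::comm_ring_1 \<Rightarrow> 'b::comm_ring_1) \<Rightarrow> 'a poly poly \<Rightarrow> 'b \<Rightarrow> 'b \<Rightarrow> 'b" where
  "bieval h \<beta> a b = poly (map_poly (\<lambda>c. poly (map_poly h c) a) \<beta>) b"

definition const3 :: "'a::comm_ring_1 \<Rightarrow> 'a poly poly poly" where
  "const3 c = [:[:[:c:]:]:]"

definition Z1 :: "'a::comm_ring_1 poly poly poly" where "Z1 = [:[:[:0, 1:]:]:]"
definition Z2 :: "'a::comm_ring_1 poly poly poly" where "Z2 = [:[:0, 1:]:]"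
definition Z3 :: "'a::comm_ring_1 poly poly poly" where "Z3 = [:0, 1:]"

definition delta2 :: "'a::comm_ring_1 poly poly \<Rightarrow> 'a poly poly poly" where
  "delta2 \<beta> = bieval const3 \<beta> Z1 Z2 + bieval const3 \<beta> (Z1 + Z2) Z3
              - bieval const3 \<beta> Z2 Z3 - bieval const3 \<beta> Z1 (Z2 + Z3)"

text \<open>beta(0,y) = 0 and beta(x,0) = 0 as polynomials in one variable.\<close>

definition normalized2 :: "'a::comm_ring_1 poly poly \<Rightarrow> bool" where
  "normalized2 \<beta> \<longleftrightarrow> bieval (\<lambda>c. [:c:]) \<beta> 0 [:0, 1:] = 0 \<and> bieval (\<lambda>c. [:c:]) \<beta> [:0, 1:] 0 = 0"

definition mon2 :: "'a::comm_ring_1 \<Rightarrow> nat \<Rightarrow> nat \<Rightarrow> 'a poly poly" where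
  "mon2 c i j = monom (monom c i) j"

end

theory Submission
  imports Defs "HOL-Computational_Algebra.Primes"
begin

(* Write cobound f beta x y z for beta(x,y) + beta(x+y,z) - beta(y,z) - beta(x,y+z),
   evaluated in an arbitrary commutative ring after mapping the coefficients of beta along a
   ring homomorphism f; then delta2 beta is cobound const3 beta Z1 Z2 Z3.  Substituting values
   for Z1, Z2, Z3 is a ring homomorphism, and cobound is natural under ring homomorphisms, so
   an identity delta2 beta = Z1^A Z2^B Z3^C specialises to cobound beta x y z = x^A y^B z^C for
   all x, y, z.
   Necessity: (1) at x = y = z = 1 in characteristic 2 the left side is beta(0,1) - beta(1,0),
   which vanishes by the normalisation, while the right side is 1.  (2) The alternating sum of
   cobound over the six permutations of (x,y,z) vanishes identically; applied to Z1^A Z2^B Z3^C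
   the monomial Z1^A Z2^B Z3^C survives unless A = B or A = C.
   Sufficiency: by the Freshman's dream, x -> x^(p^k) is additive, and the two explicit
   witnesses reduce to polynomial identities valid in any ring in which 2 is invertible. *)

section \<open>Ring homomorphisms between commutative rings\<close>

definition is_ring_hom :: "('a::comm_ring_1 \<Rightarrow> 'b::comm_ring_1) \<Rightarrow> bool" where
  "is_ring_hom f \<longleftrightarrow> f 0 = 0 \<and> f 1 = 1 \<and> (\<forall>a b. f (a + b) = f a + f b) \<and> (\<forall>a b. f (a * b) = f a * f b)"

lemma ring_hom_0: "is_ring_hom f \<Longrightarrow> f 0 = 0"
  and ring_hom_1: "is_ring_hom f \<Longrightarrow> f 1 = 1"
  and ring_hom_add: "is_ring_hom f \<Longrightarrow> f (a + b) = f a + f b"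
  and ring_hom_mult: "is_ring_hom f \<Longrightarrow> f (a * b) = f a * f b"
  by (auto simp: is_ring_hom_def)

lemma ring_hom_diff:
  assumes "is_ring_hom f" shows "f (a - b) = f a - f b"
proof -
  have "f (a - b) + f b = f a"
    using ring_hom_add[OF assms, of "a - b" b] by simp
  thus ?thesis by (simp add: eq_diff_eq)
qed

lemma ring_hom_power: "is_ring_hom f \<Longrightarrow> f (a ^ n) = f a ^ n"
  by (induction n) (simp_all add: ring_hom_1 ring_hom_mult)

lemma ring_hom_sum: "is_ring_hom f \<Longrightarrow> f (sum g A) = (\<Sum>x\<in>A. f (g x))"
  by (induction A rule: infinite_finite_induct) (simp_all add: ring_hom_0 ring_hom_add)

lemma ring_hom_of_nat: "is_ring_hom f \<Longrightarrow> f (of_nat n) = of_nat n"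
  by (induction n) (simp_all add: ring_hom_0 ring_hom_1 ring_hom_add)

lemma ring_hom_numeral: "is_ring_hom f \<Longrightarrow> f (numeral k) = numeral k"
  using ring_hom_of_nat[of f "numeral k"] by simp

lemma ring_hom_id: "is_ring_hom (\<lambda>x. x)"
  and ring_hom_const_poly: "is_ring_hom (\<lambda>c. [:c:])"
  and ring_hom_const3: "is_ring_hom const3"
  by (auto simp: is_ring_hom_def const3_def pCons_one)

lemma ring_hom_map_poly:
  assumes "is_ring_hom f" shows "is_ring_hom (map_poly f)"
  unfolding is_ring_hom_def
  using assms by (auto intro!: poly_eqI simp: coeff_map_poly coeff_mult ring_hom_0 ring_hom_1
      ring_hom_add ring_hom_sum ring_hom_mult)

definition eval1 :: "('a::comm_ring_1 \<Rightarrow> 'b::comm_ring_1) \<Rightarrow> 'b \<Rightarrow> 'a poly \<Rightarrow> 'b" where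
  "eval1 f x P = poly (map_poly f P) x"

lemma ring_hom_eval1: "is_ring_hom f \<Longrightarrow> is_ring_hom (eval1 f x)"
  using ring_hom_map_poly[of f] unfolding is_ring_hom_def eval1_def by simp

lemma ring_hom_poly: "is_ring_hom g \<Longrightarrow> g (poly P y) = poly (map_poly g P) (g y)"
  by (induction P rule: pCons_induct) (simp_all add: map_poly_pCons ring_hom_0 ring_hom_add ring_hom_mult)

lemma eval1_natural:
  assumes g: "is_ring_hom g" and f: "is_ring_hom f"
  shows "g (eval1 f x P) = eval1 (g \<circ> f) (g x) P"
  unfolding eval1_def ring_hom_poly[OF g]
  by (simp add: map_poly_map_poly ring_hom_0[OF g] ring_hom_0[OF f])

lemma bieval_eq_eval1: "bieval h \<beta> a b = eval1 (eval1 h a) b \<beta>"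
  by (simp add: bieval_def eval1_def[abs_def])

lemma bieval_natural:
  assumes g: "is_ring_hom g" and h: "is_ring_hom h"
  shows "g (bieval h \<beta> a b) = bieval (g \<circ> h) \<beta> (g a) (g b)"
proof -
  have "g \<circ> eval1 h a = eval1 (g \<circ> h) (g a)"
    by (simp add: fun_eq_iff eval1_natural[OF g h])
  thus ?thesis
    unfolding bieval_eq_eval1 by (simp add: eval1_natural[OF g ring_hom_eval1[OF h]])
qed

lemma bieval_add: "is_ring_hom h \<Longrightarrow> bieval h (\<beta>1 + \<beta>2) a b = bieval h \<beta>1 a b + bieval h \<beta>2 a b"
  unfolding bieval_eq_eval1 by (intro ring_hom_add ring_hom_eval1)

lemma bieval_mon2: "is_ring_hom h \<Longrightarrow> bieval h (mon2 c i j) a b = h c * a ^ i * b ^ j"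
  unfolding bieval_def mon2_def by (simp add: map_poly_monom ring_hom_0 poly_monom)

lemma normalized2_vanish:
  assumes "normalized2 \<beta>" and f: "is_ring_hom f"
  shows "bieval f \<beta> 0 y = 0" and "bieval f \<beta> x 0 = 0"
proof -
  have subst: "eval1 f t (bieval (\<lambda>c. [:c:]) \<beta> a b) = bieval f \<beta> (eval1 f t a) (eval1 f t b)" for t a b
  proof -
    have "eval1 f t \<circ> (\<lambda>c. [:c:]) = f"
      by (simp add: fun_eq_iff eval1_def map_poly_pCons ring_hom_0[OF f])
    thus ?thesis by (simp add: bieval_natural[OF ring_hom_eval1[OF f] ring_hom_const_poly])
  qed
  have var: "eval1 f t 0 = 0" "eval1 f t [:0, 1:] = t" for t
    by (simp_all add: eval1_def map_poly_pCons ring_hom_0[OF f] ring_hom_1[OF f])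
  show "bieval f \<beta> 0 y = 0" "bieval f \<beta> x 0 = 0"
    using subst[of y 0 "[:0, 1:]"] subst[of x "[:0, 1:]" 0] assms(1) var
    by (simp_all add: normalized2_def)
qed

definition eval3 :: "('a::comm_ring_1 \<Rightarrow> 'b::comm_ring_1) \<Rightarrow> 'b \<Rightarrow> 'b \<Rightarrow> 'b \<Rightarrow> 'a poly poly poly \<Rightarrow> 'b" where
  "eval3 f x y z = eval1 (eval1 (eval1 f x) y) z"

lemma ring_hom_eval3: "is_ring_hom f \<Longrightarrow> is_ring_hom (eval3 f x y z)"
  unfolding eval3_def by (intro ring_hom_eval1)

lemma eval3_simps:
  assumes "is_ring_hom f"
  shows "eval3 f x y z Z1 = x" "eval3 f x y z Z2 = y" "eval3 f x y z Z3 = z"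
    and "eval3 f x y z (const3 c) = f c"
  using assms by (simp_all add: eval3_def eval1_def Z1_def Z2_def Z3_def const3_def map_poly_pCons
      ring_hom_0 ring_hom_1)

lemma coeff_monomial3:
  "coeff (coeff (coeff ((Z1::'a::comm_ring_1 poly poly poly) ^ a * Z2 ^ b * Z3 ^ c) k) j) i
     = (if a = i \<and> b = j \<and> c = k then 1 else 0)"
proof -
  have const_pow: "[:u:] ^ n = [:u ^ n:]" for u :: "'b::comm_ring_1" and n
    by (induction n) (simp_all add: pCons_one mult.commute)
  have "(Z1::'a poly poly poly) ^ a * Z2 ^ b * Z3 ^ c = monom (monom (monom 1 a) b) c"
    unfolding Z1_def Z2_def Z3_def
    by (simp add: const_pow monom_altdef smult_monom flip: smult_monom_mult)
  thus ?thesis by (simp add: coeff_monom)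
qed

section \<open>The coboundary in an arbitrary ring\<close>

definition cobound :: "('a::comm_ring_1 \<Rightarrow> 'r::comm_ring_1) \<Rightarrow> 'a poly poly \<Rightarrow> 'r \<Rightarrow> 'r \<Rightarrow> 'r \<Rightarrow> 'r" where
  "cobound f \<beta> x y z = bieval f \<beta> x y + bieval f \<beta> (x + y) z - bieval f \<beta> y z - bieval f \<beta> x (y + z)"

lemma delta2_eq_cobound: "delta2 \<beta> = cobound const3 \<beta> Z1 Z2 Z3"
  by (simp add: delta2_def cobound_def)

lemma cobound_natural:
  assumes g: "is_ring_hom g" and f: "is_ring_hom f"
  shows "g (cobound f \<beta> x y z) = cobound (g \<circ> f) \<beta> (g x) (g y) (g z)"
  by (simp add: cobound_def ring_hom_add[OF g] ring_hom_diff[OF g] bieval_natural[OF g f])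

lemma eval3_delta2:
  assumes "is_ring_hom f"
  shows "eval3 f x y z (delta2 \<beta>) = cobound f \<beta> x y z"
proof -
  have "eval3 f x y z \<circ> const3 = f" using eval3_simps(4)[OF assms] by (simp add: fun_eq_iff)
  thus ?thesis unfolding delta2_eq_cobound
    by (simp add: cobound_natural[OF ring_hom_eval3[OF assms] ring_hom_const3] eval3_simps[OF assms])
qed

lemma cobound_alternating_sum:
  "cobound f \<beta> x y z - cobound f \<beta> x z y - cobound f \<beta> y x z
     + cobound f \<beta> y z x + cobound f \<beta> z x y - cobound f \<beta> z y x = 0"
  by (simp add: cobound_def algebra_simps)

lemma cobound_add:
  "is_ring_hom f \<Longrightarrow> cobound f (\<beta>1 + \<beta>2) x y z = cobound f \<beta>1 x y z + cobound f \<beta>2 x y z"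
  by (simp add: cobound_def bieval_add algebra_simps)

lemma cobound_mon2:
  "is_ring_hom f \<Longrightarrow> cobound f (mon2 c i j) x y z
     = f c * (x ^ i * y ^ j + (x + y) ^ i * z ^ j - y ^ i * z ^ j - x ^ i * (y + z) ^ j)"
  by (simp add: cobound_def bieval_mon2 algebra_simps)

section \<open>Necessary conditions\<close>

text \<open>In characteristic 2 no normalised beta has a monomial coboundary: at (1,1,1) the
  coboundary becomes beta(0,1) - beta(1,0) = 0, while the monomial becomes 1.\<close>

lemma monomial_coboundary_char_not_2:
  fixes \<beta> :: "'a::comm_ring_1 poly poly"
  assumes norm: "normalized2 \<beta>" and eq: "delta2 \<beta> = Z1 ^ A * Z2 ^ B * Z3 ^ C"
  shows "(2::'a) \<noteq> 0"
proof
  assume two: "(2::'a) = 0"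
  have "eval3 (\<lambda>x. x) 1 1 1 (delta2 \<beta>) = bieval (\<lambda>x. x) \<beta> 0 1 - bieval (\<lambda>x::'a. x) \<beta> 1 0"
  proof -
    have "1 + 1 = (0::'a)" using two by simp
    thus ?thesis unfolding eval3_delta2[OF ring_hom_id] cobound_def by simp
  qed
  also have "\<dots> = 0" using normalized2_vanish[OF norm ring_hom_id] by simp
  finally have "eval3 (\<lambda>x::'a. x) 1 1 1 (Z1 ^ A * Z2 ^ B * Z3 ^ C) = 0" by (simp add: eq)
  moreover have "eval3 (\<lambda>x::'a. x) 1 1 1 (Z1 ^ A * Z2 ^ B * Z3 ^ C) = 1"
    unfolding ring_hom_mult[OF ring_hom_eval3[OF ring_hom_id]] ring_hom_power[OF ring_hom_eval3[OF ring_hom_id]]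
      eval3_simps[OF ring_hom_id] by simp
  ultimately show False by simp
qed

text \<open>If delta2 beta = Z1^A Z2^B Z3^C with B \<noteq> C, then A = B or A = C: otherwise the
  monomial Z1^A Z2^B Z3^C survives in the antisymmetrisation.\<close>

lemma monomial_coboundary_exponents:
  fixes \<beta> :: "'a::comm_ring_1 poly poly"
  assumes eq: "delta2 \<beta> = Z1 ^ A * Z2 ^ B * Z3 ^ C" and "B \<noteq> C"
  shows "A = B \<or> A = C"
proof (rule ccontr)
  assume distinct: "\<not> (A = B \<or> A = C)"
  define R where "R = (\<lambda>x y z :: 'a poly poly poly. x ^ A * y ^ B * z ^ C)"
  have cob: "cobound const3 \<beta> x y z = R x y z" for x y z
    using arg_cong[OF eq, of "eval3 const3 x y z"] ring_hom_eval3[OF ring_hom_const3, of x y z]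
    by (simp add: eval3_delta2[OF ring_hom_const3] R_def ring_hom_mult ring_hom_power
        eval3_simps[OF ring_hom_const3])
  define S :: "'a poly poly poly" where "S = Z1 ^ A * Z2 ^ B * Z3 ^ C - Z1 ^ A * Z2 ^ C * Z3 ^ B
      - Z1 ^ B * Z2 ^ A * Z3 ^ C + Z1 ^ C * Z2 ^ A * Z3 ^ B + Z1 ^ B * Z2 ^ C * Z3 ^ A
      - Z1 ^ C * Z2 ^ B * Z3 ^ A"
  have "R Z1 Z2 Z3 - R Z1 Z3 Z2 - R Z2 Z1 Z3 + R Z2 Z3 Z1 + R Z3 Z1 Z2 - R Z3 Z2 Z1 = 0"
    using cobound_alternating_sum[of const3 \<beta> Z1 Z2 Z3] by (simp only: cob)
  moreover have "R Z1 Z2 Z3 - R Z1 Z3 Z2 - R Z2 Z1 Z3 + R Z2 Z3 Z1 + R Z3 Z1 Z2 - R Z3 Z2 Z1 = S"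
    by (simp add: R_def S_def mult_ac)
  ultimately have "coeff (coeff (coeff S C) B) A = 0" by simp
  thus False using distinct \<open>B \<noteq> C\<close> by (simp add: S_def coeff_monomial3)
qed

section \<open>Sufficient conditions\<close>

text \<open>The two witnesses satisfy their cocycle equations in any commutative ring in which 2 is
  invertible (h = 1/2) and the relevant power maps are additive.\<close>

lemma witness_identity_first:
  fixes x y z h :: "'r::comm_ring_1"
  assumes "h * 2 = 1" "(x + y) ^ A = x ^ A + y ^ A" "(y + z) ^ C = y ^ C + z ^ C"
  shows "h * (x ^ (2 * A) * y ^ C + (x + y) ^ (2 * A) * z ^ C - y ^ (2 * A) * z ^ C
              - x ^ (2 * A) * (y + z) ^ C) = x ^ A * y ^ A * z ^ C"
proof -
  have sq: "u ^ (2 * A) = (u ^ A)\<^sup>2" for u :: 'r by (simp add: power_mult[symmetric] mult.commute)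
  have "h * (x ^ (2 * A) * y ^ C + (x + y) ^ (2 * A) * z ^ C - y ^ (2 * A) * z ^ C
              - x ^ (2 * A) * (y + z) ^ C) = (h * 2) * (x ^ A * y ^ A * z ^ C)"
    unfolding sq assms(2,3) by (simp add: algebra_simps power2_eq_square)
  thus ?thesis using assms(1) by simp
qed

lemma witness_identity_second:
  fixes x y z h :: "'r::comm_ring_1"
  assumes "h * 2 = 1" "(x + y) ^ A = x ^ A + y ^ A" "(x + y) ^ B = x ^ B + y ^ B"
    "(y + z) ^ A = y ^ A + z ^ A"
  shows "(x ^ (A + B) * y ^ A + (x + y) ^ (A + B) * z ^ A - y ^ (A + B) * z ^ A - x ^ (A + B) * (y + z) ^ A)
       + h * (x ^ B * y ^ (2 * A) + (x + y) ^ B * z ^ (2 * A) - y ^ B * z ^ (2 * A) - x ^ B * (y + z) ^ (2 * A))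
       = x ^ A * y ^ B * z ^ A"
proof -
  have sq: "u ^ (2 * A) = (u ^ A)\<^sup>2" for u :: 'r by (simp add: power_mult[symmetric] mult.commute)
  have "(x ^ (A + B) * y ^ A + (x + y) ^ (A + B) * z ^ A - y ^ (A + B) * z ^ A - x ^ (A + B) * (y + z) ^ A)
       + h * (x ^ B * y ^ (2 * A) + (x + y) ^ B * z ^ (2 * A) - y ^ B * z ^ (2 * A) - x ^ B * (y + z) ^ (2 * A))
       = x ^ A * y ^ B * z ^ A + (1 - h * 2) * (x ^ B * y ^ A * z ^ A)"
    unfolding sq power_add assms(2-4) by (simp add: algebra_simps power2_eq_square)
  thus ?thesis using assms(1) by simp
qed

lemma frobenius_trivariate:
  assumes "prime CHAR('a::comm_ring_1)"
  shows "(u + v :: 'a poly poly poly) ^ (CHAR('a) ^ k) = u ^ (CHAR('a) ^ k) + v ^ (CHAR('a) ^ k)"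
  using freshmans_dream'[where 'a = "'a poly poly poly", of "CHAR('a) ^ k" k] assms by simp

lemma two_eq_zero_iff_CHAR:
  assumes "prime CHAR('a::comm_ring_1)" shows "(2::'a) = 0 \<longleftrightarrow> CHAR('a) = 2"
proof -
  have "(2::'a) = 0 \<longleftrightarrow> CHAR('a) dvd 2" using of_nat_eq_0_iff_char_dvd[of 2] by simp
  also have "\<dots> \<longleftrightarrow> CHAR('a) = 2"
    using assms by (auto dest: primes_dvd_imp_eq[OF _ two_is_prime_nat])
  finally show ?thesis .
qed

lemma const3_half:
  assumes "(2::'a::field) \<noteq> 0" shows "const3 (1 / 2 :: 'a) * 2 = 1"
proof -
  have "const3 ((1 / 2 :: 'a) * 2) = 1" using assms ring_hom_1[OF ring_hom_const3] by simp
  thus ?thesis by (simp only: ring_hom_mult[OF ring_hom_const3] ring_hom_numeral[OF ring_hom_const3])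
qed

lemma sufficient_first:
  fixes a c :: nat
  assumes p: "prime CHAR('a::field)" and two: "(2::'a) \<noteq> 0"
  defines "A \<equiv> CHAR('a) ^ a" and "C \<equiv> CHAR('a) ^ c"
  shows "normalized2 (mon2 (1 / 2 :: 'a) (2 * A) C)
       \<and> delta2 (mon2 (1 / 2 :: 'a) (2 * A) C) = Z1 ^ A * Z2 ^ A * Z3 ^ C"
proof
  have "A > 0" "C > 0" using p prime_gt_0_nat unfolding A_def C_def by auto
  thus "normalized2 (mon2 (1 / 2 :: 'a) (2 * A) C)"
    by (simp add: normalized2_def bieval_mon2[OF ring_hom_const_poly])
  show "delta2 (mon2 (1 / 2 :: 'a) (2 * A) C) = Z1 ^ A * Z2 ^ A * Z3 ^ C"
    unfolding delta2_eq_cobound cobound_mon2[OF ring_hom_const3]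
    by (rule witness_identity_first[OF const3_half[OF two]])
      (simp_all add: A_def C_def frobenius_trivariate[OF p])
qed

lemma sufficient_second:
  fixes a b :: nat
  assumes p: "prime CHAR('a::field)" and two: "(2::'a) \<noteq> 0"
  defines "A \<equiv> CHAR('a) ^ a" and "B \<equiv> CHAR('a) ^ b"
  shows "normalized2 (mon2 (1::'a) (A + B) A + mon2 (1 / 2) B (2 * A))
       \<and> delta2 (mon2 (1::'a) (A + B) A + mon2 (1 / 2) B (2 * A)) = Z1 ^ A * Z2 ^ B * Z3 ^ A"
proof
  have "A > 0" "B > 0" using p prime_gt_0_nat unfolding A_def B_def by auto
  thus "normalized2 (mon2 (1::'a) (A + B) A + mon2 (1 / 2) B (2 * A))"
    by (simp add: normalized2_def bieval_add[OF ring_hom_const_poly] bieval_mon2[OF ring_hom_const_poly]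
        power_0_left)
  show "delta2 (mon2 (1::'a) (A + B) A + mon2 (1 / 2) B (2 * A)) = Z1 ^ A * Z2 ^ B * Z3 ^ A"
    unfolding delta2_eq_cobound cobound_add[OF ring_hom_const3] cobound_mon2[OF ring_hom_const3]
      ring_hom_1[OF ring_hom_const3] mult_1_left
    by (rule witness_identity_second[OF const3_half[OF two]])
      (simp_all add: A_def B_def frobenius_trivariate[OF p])
qed

theorem mainTheorem14:
  fixes m n l2 l3 :: nat
  assumes "CHAR('a::alg_closed_field) > 0"
    and "m < n"
  defines "p \<equiv> CHAR('a)"
  defines "rhs \<equiv> Z1 ^ (p ^ l3) * Z2 ^ (p ^ (l2 + m)) * Z3 ^ (p ^ (l2 + n)) :: 'a poly poly poly"
  shows "((\<exists>\<beta> :: 'a poly poly. normalized2 \<beta> \<and> delta2 \<beta> = rhs)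
            \<longrightarrow> p \<noteq> 2 \<and> (int l3 - int l2 = int m \<or> int l3 - int l2 = int n))
       \<and> (p \<noteq> 2 \<longrightarrow>
            (int l3 - int l2 = int m \<longrightarrow>
               (let \<beta> = mon2 (1 / 2) (2 * p ^ l3) (p ^ (l2 + n))
                in normalized2 \<beta> \<and> delta2 \<beta> = rhs))
          \<and> (int l3 - int l2 = int n \<longrightarrow>
               (let \<beta> = mon2 1 (p ^ l3 + p ^ (l2 + m)) (p ^ l3)
                          + mon2 (1 / 2) (p ^ (l2 + m)) (2 * p ^ l3)
                in normalized2 \<beta> \<and> delta2 \<beta> = rhs)))"
proof -
  have prime: "prime p" unfolding p_def using assms(1) by (rule prime_CHAR_semidom)
  hence p1: "p > 1" by (rule prime_gt_1_nat)
  define A B C where "A = p ^ l3" and "B = p ^ (l2 + m)" and "C = p ^ (l2 + n)"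
  have rhs_eq: "rhs = Z1 ^ A * Z2 ^ B * Z3 ^ C" unfolding rhs_def A_def B_def C_def ..
  have BC: "B \<noteq> C" unfolding B_def C_def using p1 assms(2) by (simp add: power_inject_exp)
  have AB: "A = B \<longleftrightarrow> int l3 - int l2 = int m" unfolding A_def B_def using p1 by (auto simp: power_inject_exp)
  have AC: "A = C \<longleftrightarrow> int l3 - int l2 = int n" unfolding A_def C_def using p1 by (auto simp: power_inject_exp)
  have two: "(2::'a) = 0 \<longleftrightarrow> p = 2"
    using two_eq_zero_iff_CHAR[where 'a='a] prime unfolding p_def by simp
  have necessary: "(\<exists>\<beta> :: 'a poly poly. normalized2 \<beta> \<and> delta2 \<beta> = rhs)
      \<longrightarrow> p \<noteq> 2 \<and> (int l3 - int l2 = int m \<or> int l3 - int l2 = int n)"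
  proof
    assume "\<exists>\<beta> :: 'a poly poly. normalized2 \<beta> \<and> delta2 \<beta> = rhs"
    then obtain \<beta> :: "'a poly poly" where "normalized2 \<beta>" "delta2 \<beta> = Z1 ^ A * Z2 ^ B * Z3 ^ C"
      unfolding rhs_eq by blast
    thus "p \<noteq> 2 \<and> (int l3 - int l2 = int m \<or> int l3 - int l2 = int n)"
      using monomial_coboundary_char_not_2 monomial_coboundary_exponents[OF _ BC] two AB AC by blast
  qed
  show ?thesis
  proof (rule conjI[OF necessary], intro conjI impI)
    assume "p \<noteq> 2" and "int l3 - int l2 = int m"
    hence "(2::'a) \<noteq> 0" and "l3 = l2 + m" using two by simp_all
    thus "let \<beta> = mon2 (1 / 2) (2 * p ^ l3) (p ^ (l2 + n)) in normalized2 \<beta> \<and> delta2 \<beta> = rhs"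
      using sufficient_first[where 'a='a, of l3 "l2 + n", folded p_def] prime by (simp add: Let_def rhs_def)
  next
    assume "p \<noteq> 2" and "int l3 - int l2 = int n"
    hence "(2::'a) \<noteq> 0" and "l3 = l2 + n" using two by simp_all
    thus "let \<beta> = mon2 1 (p ^ l3 + p ^ (l2 + m)) (p ^ l3) + mon2 (1 / 2) (p ^ (l2 + m)) (2 * p ^ l3)
          in normalized2 \<beta> \<and> delta2 \<beta> = rhs"
      using sufficient_second[where 'a='a, of l3 "l2 + m", folded p_def] prime by (simp add: Let_def rhs_def)
  qed
qed

end
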